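(* For every instance such that $K:=\pi_1+\pi_3+\pi_4-1\ge 1$ and $|S_2|\le K$, we have $H^{PW''}\le \tfrac{15}{8}H^*$.
   Context: An instance consists of an integer $n\ge 1$ and growth rates $1=h(1)\ge h(2)\ge\cdots\ge h(n)>0$ of bamboos $b_1,\dots,b_n$. Bamboo Garden Trimming (discrete version): - All heights are $0$ initially. - On each day $t=1,2,\dots$ every bamboo $b_j$ grows by $h(j)$. - At the end of each day the gardener cuts exactly one bamboo $\sigma(t)\in\{1,\dots,n\}$ back to height $0$. The height of a schedule $\sigma:\mathbb{N}\to\{1,\dots,n\}$ is the supremum, over all days $t$ and all $j$, of the height of $b_j$ at the end of day $t$ just before the cut. $H^*$ denotes the infimum of this height over all schedules. Value of algorithm PW'': - Split $\{1,\dots,n\}$ into four sets: - $S_1=\{j: \tfrac23<h(j)\le 1\}$; - $S_2=\{j:\tfrac12<h(j)\le\tfrac23\}$; - $S_3=\{j: h(j)\le\tfrac12 \text{ and } \tfrac23 2^{-k}<h(j)\le 2^{-k}\text{ for some integer }k\ge1\}$; - $S_4=\{j: h(j)\le\tfrac12\text{ and } 2^{-(k+1)}<h(j)\le \tfrac23 2^{-k}\text{ for some integer }k\ge 1\}$. - Modified growths: $h''(j)=2^{-k}$ for $j\in S_3$ and $h''(j)=\tfrac23 2^{-k}$ for $j\in S_4$, with $k$ as in the definition of the set. - Let $\pi_1=|S_1|$, $sh_3=\sum_{j\in S_3}h''(j)$, $sh_4=\sum_{j\in S_4}h''(j)$, $\pi_3=\lfloor sh_3\rfloor$, $\pi_4=\lfloor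 sh_4\rfloor$, $f_3=sh_3-\pi_3$, $f_4=sh_4-\pi_4$. - Option (a): $\pi_R(a)=\lceil f_3+f_4\rceil$ and $z(a)=\pi_1+|S_2|+\pi_3+\pi_4+\pi_R(a)$. - Option (b): if $S_2=\emptyset$ put $z(b)=+\infty$. Otherwise let $h^*=\max_{j\in S_2}h(j)$ and $f_2=\tfrac12$ if $|S_2|$ is odd, $f_2=0$ if $|S_2|$ is even. Then $\pi_R(b)=\lceil f_2+f_3+f_4\rceil$ and $z(b)=2h^*\,(\pi_1+\lfloor |S_2|/2\rfloor+\pi_3+\pi_4+\pi_R(b))$. - The value returned by algorithm PW'' is $H^{PW''}=\min\{z(a),z(b)\}$. The paper takes this as the maximum height of the periodic pinwheel trimming schedule that it builds from these partitions. *)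

theory Defs
  imports Complex_Main "HOL-Library.Extended_Real"
begin

definition bgt_instance :: "nat \<Rightarrow> (nat \<Rightarrow> real) \<Rightarrow> bool" where
  "bgt_instance n h \<longleftrightarrow> n \<ge> 1 \<and> h 1 = 1 \<and> h n > 0 \<and>
     (\<forall>i j. 1 \<le> i \<longrightarrow> i \<le> j \<longrightarrow> j \<le> n \<longrightarrow> h j \<le> h i)"

text \<open>Schedules: days t = 1,2,...; sigma t is the bamboo cut at the end of day t.\<close>
definition schedule :: "nat \<Rightarrow> (nat \<Rightarrow> nat) \<Rightarrow> bool" where
  "schedule n \<sigma> \<longleftrightarrow> (\<forall>t\<ge>1. \<sigma> t \<in> {1..n})"

definition last_cut :: "(nat \<Rightarrow> nat) \<Rightarrow> nat \<Rightarrow> nat \<Rightarrow> nat" where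
  "last_cut \<sigma> j t = Max ({0} \<union> {s. 1 \<le> s \<and> s < t \<and> \<sigma> s = j})"

text \<open>Height of bamboo j at the end of day t, just before the cut.\<close>
definition bamboo_height :: "(nat \<Rightarrow> real) \<Rightarrow> (nat \<Rightarrow> nat) \<Rightarrow> nat \<Rightarrow> nat \<Rightarrow> real" where
  "bamboo_height h \<sigma> j t = h j * real (t - last_cut \<sigma> j t)"

definition schedule_height :: "nat \<Rightarrow> (nat \<Rightarrow> real) \<Rightarrow> (nat \<Rightarrow> nat) \<Rightarrow> ereal" where
  "schedule_height n h \<sigma> =
     (SUP p \<in> {p. 1 \<le> fst p \<and> 1 \<le> snd p \<and> snd p \<le> n}. ereal (bamboo_height h \<sigma> (snd p) (fst p)))"

definition H_opt :: "nat \<Rightarrow> (nat \<Rightarrow> real) \<Rightarrow> ereal" where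
  "H_opt n h = (INF \<sigma> \<in> {\<sigma>. schedule n \<sigma>}. schedule_height n h \<sigma>)"

definition S1 :: "nat \<Rightarrow> (nat \<Rightarrow> real) \<Rightarrow> nat set" where
  "S1 n h = {j \<in> {1..n}. 2/3 < h j \<and> h j \<le> 1}"
definition S2 :: "nat \<Rightarrow> (nat \<Rightarrow> real) \<Rightarrow> nat set" where
  "S2 n h = {j \<in> {1..n}. 1/2 < h j \<and> h j \<le> 2/3}"
definition S3 :: "nat \<Rightarrow> (nat \<Rightarrow> real) \<Rightarrow> nat set" where
  "S3 n h = {j \<in> {1..n}. h j \<le> 1/2 \<and>
     (\<exists>k::nat. k \<ge> 1 \<and> 2/3 * (1/2)^k < h j \<and> h j \<le> (1/2)^k)}"
definition S4 :: "nat \<Rightarrow> (nat \<Rightarrow> real) \<Rightarrow> nat set" where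
  "S4 n h = {j \<in> {1..n}. h j \<le> 1/2 \<and>
     (\<exists>k::nat. k \<ge> 1 \<and> (1/2)^(k+1) < h j \<and> h j \<le> 2/3 * (1/2)^k)}"

definition k3 :: "(nat \<Rightarrow> real) \<Rightarrow> nat \<Rightarrow> nat" where
  "k3 h j = (THE k::nat. k \<ge> 1 \<and> 2/3 * (1/2)^k < h j \<and> h j \<le> (1/2)^k)"
definition k4 :: "(nat \<Rightarrow> real) \<Rightarrow> nat \<Rightarrow> nat" where
  "k4 h j = (THE k::nat. k \<ge> 1 \<and> (1/2)^(k+1) < h j \<and> h j \<le> 2/3 * (1/2)^k)"

definition h3 :: "(nat \<Rightarrow> real) \<Rightarrow> nat \<Rightarrow> real" where
  "h3 h j = (1/2)^(k3 h j)"
definition h4 :: "(nat \<Rightarrow> real) \<Rightarrow> nat \<Rightarrow> real" where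
  "h4 h j = 2/3 * (1/2)^(k4 h j)"

definition sh3 :: "nat \<Rightarrow> (nat \<Rightarrow> real) \<Rightarrow> real" where
  "sh3 n h = (\<Sum>j\<in>S3 n h. h3 h j)"
definition sh4 :: "nat \<Rightarrow> (nat \<Rightarrow> real) \<Rightarrow> real" where
  "sh4 n h = (\<Sum>j\<in>S4 n h. h4 h j)"

definition pi1 :: "nat \<Rightarrow> (nat \<Rightarrow> real) \<Rightarrow> int" where
  "pi1 n h = int (card (S1 n h))"
definition pi3 :: "nat \<Rightarrow> (nat \<Rightarrow> real) \<Rightarrow> int" where
  "pi3 n h = \<lfloor>sh3 n h\<rfloor>"
definition pi4 :: "nat \<Rightarrow> (nat \<Rightarrow> real) \<Rightarrow> int" where
  "pi4 n h = \<lfloor>sh4 n h\<rfloor>"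
definition f3 :: "nat \<Rightarrow> (nat \<Rightarrow> real) \<Rightarrow> real" where
  "f3 n h = sh3 n h - of_int (pi3 n h)"
definition f4 :: "nat \<Rightarrow> (nat \<Rightarrow> real) \<Rightarrow> real" where
  "f4 n h = sh4 n h - of_int (pi4 n h)"

definition z_a :: "nat \<Rightarrow> (nat \<Rightarrow> real) \<Rightarrow> real" where
  "z_a n h = of_int (pi1 n h + int (card (S2 n h)) + pi3 n h + pi4 n h
                     + \<lceil>f3 n h + f4 n h\<rceil>)"

definition f2 :: "nat \<Rightarrow> (nat \<Rightarrow> real) \<Rightarrow> real" where
  "f2 n h = (if odd (card (S2 n h)) then 1/2 else 0)"

definition z_b :: "nat \<Rightarrow> (nat \<Rightarrow> real) \<Rightarrow> ereal" where
  "z_b n h = (if S2 n h = {} then \<infinity> else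
     ereal (2 * Max (h ` S2 n h) *
       of_int (pi1 n h + int (card (S2 n h) div 2) + pi3 n h + pi4 n h
               + \<lceil>f2 n h + f3 n h + f4 n h\<rceil>)))"

definition H_PW :: "nat \<Rightarrow> (nat \<Rightarrow> real) \<Rightarrow> ereal" where
  "H_PW n h = min (ereal (z_a n h)) (z_b n h)"

end

theory Submission
  imports Defs
begin

text \<open>
  Lower bound: in every schedule one bamboo is cut per day while the garden grows by
  \<open>S = \<Sum>j h(j)\<close> per day, so if all heights stay below \<open>H\<close> the total height after
  \<open>T\<close> days is at least \<open>T (S - H)\<close>; it is also at most \<open>n H\<close>, which forces \<open>S \<le> H\<close>
  and hence \<open>S \<le> H\<^sup>*\<close>.
  Upper bound: option (a) alone suffices. Every \<open>j \<in> S\<^sub>1\<close> other than \<open>b\<^sub>1\<close> has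
  \<open>h(j) > 2/3\<close>, every \<open>j \<in> S\<^sub>2\<close> has \<open>h(j) > 1/2\<close>, and rounding up within \<open>S\<^sub>3, S\<^sub>4\<close> loses at most a factor \<open>3/2\<close>.
  Comparing \<open>z(a) \<le> X + |S\<^sub>2| + 1\<close>, where \<open>X = \<pi>\<^sub>1 + sh\<^sub>3 + sh\<^sub>4\<close>, with
  \<open>S \<ge> 1/3 + 2X/3 + |S\<^sub>2|/2\<close>, the claim \<open>z(a) \<le> 15/8 S\<close> reduces to
  \<open>|S\<^sub>2| + 6 \<le> 4X\<close>, which follows from \<open>|S\<^sub>2| \<le> X - 1\<close> and \<open>X \<ge> 2\<close>.
\<close>

lemma last_cut_Suc_0: "last_cut \<sigma> j (Suc 0) = 0"
  unfolding last_cut_def by (rule Max_eqI) auto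

lemma last_cut_less:
  assumes "t \<ge> 1"
  shows "last_cut \<sigma> j t < t"
  unfolding last_cut_def using assms by (subst Max_less_iff) auto

lemma last_cut_Suc:
  assumes "t \<ge> 1"
  shows "last_cut \<sigma> j (Suc t) = (if \<sigma> t = j then t else last_cut \<sigma> j t)"
proof -
  have cuts: "{s. 1 \<le> s \<and> s < Suc t \<and> \<sigma> s = j} =
      {s. 1 \<le> s \<and> s < t \<and> \<sigma> s = j} \<union> (if \<sigma> t = j then {t} else {})"
    using assms by (auto simp: less_Suc_eq)
  show ?thesis
  proof (cases "\<sigma> t = j")
    case True
    have "Max ({0} \<union> ({s. 1 \<le> s \<and> s < t \<and> \<sigma> s = j} \<union> {t})) = t"
      by (rule Max_eqI) auto
    with True show ?thesis unfolding last_cut_def cuts by simp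
  next
    case False
    then show ?thesis unfolding last_cut_def cuts by simp
  qed
qed

lemma bamboo_height_Suc:
  assumes "t \<ge> 1"
  shows "bamboo_height h \<sigma> j (Suc t) =
    bamboo_height h \<sigma> j t + h j - (if \<sigma> t = j then bamboo_height h \<sigma> j t else 0)"
  using last_cut_less[OF assms, of \<sigma> j] last_cut_Suc[OF assms, of \<sigma> j]
  by (cases "\<sigma> t = j") (simp_all add: bamboo_height_def Suc_diff_le algebra_simps)

lemma total_height_eq:
  assumes "schedule n \<sigma>" and "T \<ge> 1"
  shows "(\<Sum>j\<in>{1..n}. bamboo_height h \<sigma> j T) =
    real T * (\<Sum>j\<in>{1..n}. h j) - (\<Sum>t\<in>{1..<T}. bamboo_height h \<sigma> (\<sigma> t) t)"
  using \<open>T \<ge> 1\<close>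
proof (induction T rule: dec_induct)
  case base
  show ?case by (simp add: bamboo_height_def last_cut_Suc_0)
next
  case (step t)
  have cut: "\<sigma> t \<in> {1..n}"
    using assms(1) step.hyps(1) unfolding schedule_def by auto
  have "(\<Sum>j\<in>{1..n}. bamboo_height h \<sigma> j (Suc t)) =
      (\<Sum>j\<in>{1..n}. bamboo_height h \<sigma> j t) + (\<Sum>j\<in>{1..n}. h j) - bamboo_height h \<sigma> (\<sigma> t) t"
    using cut by (simp add: bamboo_height_Suc[OF step.hyps(1)] sum.distrib sum_subtractf
        sum.delta' if_distrib[of "\<lambda>x. - x"] cong: if_cong)
  with step.IH step.hyps(1) show ?case
    by (simp add: algebra_simps)
qed

lemma nonpos_if_multiples_bounded:
  fixes d C :: real
  assumes "\<And>T::nat. T \<ge> 1 \<Longrightarrow> real T * d \<le> C"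
  shows "d \<le> 0"
proof (rule ccontr)
  assume "\<not> d \<le> 0"
  obtain T :: nat where T: "max 1 (C / d) < real T"
    using reals_Archimedean2 by blast
  with \<open>\<not> d \<le> 0\<close> have "C < real T * d"
    by (simp add: pos_divide_less_eq)
  moreover from T have "T \<ge> 1" by simp
  ultimately show False using assms by fastforce
qed

lemma schedule_height_ge_total_rate:
  assumes "schedule n \<sigma>" and "n \<ge> 1"
  shows "ereal (\<Sum>j\<in>{1..n}. h j) \<le> schedule_height n h \<sigma>"
proof -
  have height_le: "ereal (bamboo_height h \<sigma> j t) \<le> schedule_height n h \<sigma>"
    if "t \<ge> 1" "j \<in> {1..n}" for t j
    unfolding schedule_height_def by (rule SUP_upper2[of "(t, j)"]) (use that in auto)
  show ?thesis
  proof (cases "schedule_height n h \<sigma>")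
    case (real H)
    then have bounded: "bamboo_height h \<sigma> j t \<le> H" if "t \<ge> 1" "j \<in> {1..n}" for t j
      using height_le[OF that] by simp
    have "real T * ((\<Sum>j\<in>{1..n}. h j) - H) \<le> real n * H - H" if "T \<ge> 1" for T
    proof -
      have "real T * (\<Sum>j\<in>{1..n}. h j) =
          (\<Sum>j\<in>{1..n}. bamboo_height h \<sigma> j T) + (\<Sum>t\<in>{1..<T}. bamboo_height h \<sigma> (\<sigma> t) t)"
        using total_height_eq[OF assms(1) that] by simp
      also have "\<dots> \<le> (\<Sum>j\<in>{1..n}. H) + (\<Sum>t\<in>{1..<T}. H)"
        using assms(1) that unfolding schedule_def
        by (intro add_mono sum_mono bounded) auto
      also have "\<dots> = real n * H + (real T - 1) * H"
        using that by (simp add: of_nat_diff)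
      finally show ?thesis by (simp add: algebra_simps)
    qed
    then have "(\<Sum>j\<in>{1..n}. h j) - H \<le> 0"
      by (rule nonpos_if_multiples_bounded)
    with real show ?thesis by simp
  next
    case PInf
    then show ?thesis by simp
  next
    case MInf
    with height_le[of 1 1] assms(2) show ?thesis by simp
  qed
qed

lemma H_opt_ge_total_rate:
  assumes "n \<ge> 1"
  shows "ereal (\<Sum>j\<in>{1..n}. h j) \<le> H_opt n h"
  unfolding H_opt_def
  using schedule_height_ge_total_rate[OF _ assms] by (auto intro: INF_greatest)

lemma half_power_bracket_unique:
  fixes a b x :: real
  assumes "0 \<le> b" "b \<le> 2 * a"
    and "a * (1/2)^k < x" "x \<le> b * (1/2)^k"
    and "a * (1/2)^m < x" "x \<le> b * (1/2)^m"
  shows "k = m"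
proof -
  have False if "k < m" "a * (1/2)^k < x" "x \<le> b * (1/2)^m" for k m :: nat
  proof -
    have "(1/2::real)^m \<le> (1/2)^Suc k"
      by (rule power_decreasing) (use that in auto)
    then have "b * (1/2)^m \<le> b * (1/2)^Suc k"
      using \<open>0 \<le> b\<close> by (rule mult_left_mono)
    also have "\<dots> \<le> a * (1/2)^k"
      using \<open>b \<le> 2 * a\<close> by simp
    finally show False using that by linarith
  qed
  with assms show ?thesis by (metis linorder_neqE_nat)
qed

lemma k3_eq:
  assumes "k \<ge> 1" "2/3 * (1/2)^k < h j" "h j \<le> (1/2)^k"
  shows "k3 h j = k"
  unfolding k3_def
proof (rule the_equality)
  fix m :: nat
  assume "m \<ge> 1 \<and> 2/3 * (1/2)^m < h j \<and> h j \<le> (1/2)^m"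
  with assms show "m = k"
    using half_power_bracket_unique[of 1 "2/3" m "h j" k] by simp
qed (use assms in simp)

lemma k4_eq:
  assumes "k \<ge> 1" "(1/2)^(k+1) < h j" "h j \<le> 2/3 * (1/2)^k"
  shows "k4 h j = k"
  unfolding k4_def
proof (rule the_equality)
  fix m :: nat
  assume "m \<ge> 1 \<and> (1/2)^(m+1) < h j \<and> h j \<le> 2/3 * (1/2)^m"
  with assms show "m = k"
    using half_power_bracket_unique[of "2/3" "1/2" m "h j" k] by simp
qed (use assms in simp)

lemma h3_le_three_halves: "j \<in> S3 n h \<Longrightarrow> h3 h j \<le> 3/2 * h j"
  unfolding S3_def h3_def by (auto simp: k3_eq)

lemma h4_le_three_halves: "j \<in> S4 n h \<Longrightarrow> h4 h j \<le> 3/2 * h j"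
  unfolding S4_def h4_def by (auto simp: k4_eq)

lemma S3_S4_disjoint: "S3 n h \<inter> S4 n h = {}"
proof -
  have False if "2/3 * (1/2)^k < x" "x \<le> (1/2)^k"
    and "(1/2)^(m+1) < x" "x \<le> 2/3 * (1/2)^m" for x :: real and k m :: nat
  proof -
    have "k = m"
      using that half_power_bracket_unique[of 1 "1/2" k x m] by simp
    with that show False by simp
  qed
  then show ?thesis unfolding S3_def S4_def by blast
qed

lemma sum_S1_lower_bound:
  assumes "bgt_instance n h"
  shows "1/3 + 2/3 * real (card (S1 n h)) \<le> (\<Sum>j\<in>S1 n h. h j)"
proof -
  have fin: "finite (S1 n h)" unfolding S1_def by simp
  have one: "1 \<in> S1 n h" "h 1 = 1"
    using assms unfolding bgt_instance_def S1_def by auto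
  have "2/3 * real (card (S1 n h - {1})) \<le> (\<Sum>j\<in>S1 n h - {1}. h j)"
    using sum_bounded_below[of "S1 n h - {1}" "2/3" h] by (auto simp: S1_def algebra_simps)
  moreover have "real (card (S1 n h - {1})) = real (card (S1 n h)) - 1"
  proof -
    have "card (S1 n h) > 0" using fin one(1) by (auto simp: card_gt_0_iff)
    with one(1) show ?thesis by (simp add: of_nat_diff)
  qed
  moreover have "(\<Sum>j\<in>S1 n h. h j) = 1 + (\<Sum>j\<in>S1 n h - {1}. h j)"
    using fin one by (simp add: sum.remove)
  ultimately show ?thesis by (simp add: algebra_simps)
qed

lemma sum_classes_le_total_rate:
  assumes "bgt_instance n h"
  shows "(\<Sum>j\<in>S1 n h. h j) + (\<Sum>j\<in>S2 n h. h j) + (\<Sum>j\<in>S3 n h. h j) + (\<Sum>j\<in>S4 n h. h j)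
    \<le> (\<Sum>j\<in>{1..n}. h j)"
proof -
  have classes: "S1 n h \<subseteq> {j. 2/3 < h j}" "S2 n h \<subseteq> {j. 1/2 < h j \<and> h j \<le> 2/3}"
    "S3 n h \<subseteq> {j. h j \<le> 1/2}" "S4 n h \<subseteq> {j. h j \<le> 1/2}"
    unfolding S1_def S2_def S3_def S4_def by auto
  have sub: "S1 n h \<union> S2 n h \<union> S3 n h \<union> S4 n h \<subseteq> {1..n}"
    unfolding S1_def S2_def S3_def S4_def by blast
  then have fin: "finite (S1 n h)" "finite (S2 n h)" "finite (S3 n h)" "finite (S4 n h)"
    by (auto intro: finite_subset)
  have "S1 n h \<inter> S2 n h = {}" "(S1 n h \<union> S2 n h) \<inter> S3 n h = {}"
    "(S1 n h \<union> S2 n h \<union> S3 n h) \<inter> S4 n h = {}"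
    using classes S3_S4_disjoint[of n h] by fastforce+
  with fin have "(\<Sum>j\<in>S1 n h. h j) + (\<Sum>j\<in>S2 n h. h j) + (\<Sum>j\<in>S3 n h. h j)
      + (\<Sum>j\<in>S4 n h. h j) = (\<Sum>j\<in>S1 n h \<union> S2 n h \<union> S3 n h \<union> S4 n h. h j)"
    by (simp add: sum.union_disjoint)
  also have "\<dots> \<le> (\<Sum>j\<in>{1..n}. h j)"
  proof (rule sum_mono2[OF _ sub])
    fix j assume "j \<in> {1..n} - (S1 n h \<union> S2 n h \<union> S3 n h \<union> S4 n h)"
    then have "0 < h n" "h n \<le> h j"
      using assms unfolding bgt_instance_def by auto
    then show "0 \<le> h j" by linarith
  qed simp
  finally show ?thesis .
qed

lemma total_rate_lower_bound:
  assumes "bgt_instance n h"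
  shows "1/3 + 2/3 * real (card (S1 n h)) + 1/2 * real (card (S2 n h))
      + 2/3 * sh3 n h + 2/3 * sh4 n h \<le> (\<Sum>j\<in>{1..n}. h j)"
proof -
  have "1/2 * real (card (S2 n h)) \<le> (\<Sum>j\<in>S2 n h. h j)"
    using sum_bounded_below[of "S2 n h" "1/2" h] by (auto simp: S2_def algebra_simps)
  moreover have "sh3 n h \<le> 3/2 * (\<Sum>j\<in>S3 n h. h j)"
    unfolding sh3_def sum_distrib_left by (rule sum_mono) (rule h3_le_three_halves)
  moreover have "sh4 n h \<le> 3/2 * (\<Sum>j\<in>S4 n h. h j)"
    unfolding sh4_def sum_distrib_left by (rule sum_mono) (rule h4_le_three_halves)
  ultimately show ?thesis
    using sum_S1_lower_bound[OF assms] sum_classes_le_total_rate[OF assms] by linarith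
qed

lemma z_a_upper_bound:
  "z_a n h \<le> real (card (S1 n h)) + real (card (S2 n h)) + sh3 n h + sh4 n h + 1"
proof -
  have "of_int \<lceil>f3 n h + f4 n h\<rceil> \<le> f3 n h + f4 n h + 1"
    by (rule of_int_ceiling_le_add_one)
  moreover have "z_a n h = real (card (S1 n h)) + real (card (S2 n h)) + of_int (pi3 n h)
      + of_int (pi4 n h) + of_int \<lceil>f3 n h + f4 n h\<rceil>"
    unfolding z_a_def pi1_def by simp
  ultimately show ?thesis
    using f3_def[of n h] f4_def[of n h] by linarith
qed

theorem proposition2:
  fixes n :: nat and h :: "nat \<Rightarrow> real"
  assumes "bgt_instance n h"
    and "pi1 n h + pi3 n h + pi4 n h - 1 \<ge> 1"
    and "int (card (S2 n h)) \<le> pi1 n h + pi3 n h + pi4 n h - 1"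
  shows "H_PW n h \<le> ereal (15/8) * H_opt n h"
proof -
  have "of_int (pi3 n h) \<le> sh3 n h" "of_int (pi4 n h) \<le> sh4 n h"
    unfolding pi3_def pi4_def by simp_all
  then have bound: "z_a n h \<le> 15/8 * (\<Sum>j\<in>{1..n}. h j)"
    using z_a_upper_bound[of n h] total_rate_lower_bound[OF assms(1)] assms(2,3)
    unfolding pi1_def by linarith
  have "n \<ge> 1"
    using assms(1) unfolding bgt_instance_def by simp
  have "H_PW n h \<le> ereal (z_a n h)"
    unfolding H_PW_def by simp
  also have "\<dots> \<le> ereal (15/8) * ereal (\<Sum>j\<in>{1..n}. h j)"
    using bound by simp
  also have "\<dots> \<le> ereal (15/8) * H_opt n h"
    using H_opt_ge_total_rate[OF \<open>n \<ge> 1\<close>] by (rule ereal_mult_left_mono) simp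
  finally show ?thesis .
qed

end
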